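(* The set FIN of programs computing a function with finite domain has asymptotic probability one, and the set COF of programs computing a function with cofinite domain has asymptotic probability zero.
   Context: Model of computation: a single head reads and writes symbols $0,1$ on a one-way infinite tape with cells indexed $0,1,2,\dots$; the head starts on cell $0$. An $n$-state program has states $Q=\{q_1,\dots,q_n\}$, with $q_1$ the start state, plus a separate halt state not in $Q$. A program is a function $p: Q\times\{0,1\}\to (Q\cup\{\mathrm{halt}\})\times\{0,1\}\times\{L,R\}$; $p(q,i)=\langle r,j,d\rangle$ means: in state $q$ reading $i$, write $j$, move one cell in direction $d$, enter state $r$. The computation stops when the halt state is reached ("halting") or when the head attempts to move left from cell $0$ ("falls off the tape"); falling off is not counted as halting. Let $P_n$ be the set of all $n$-state programs; the asymptotic probability of a set $B$ of programs is $\mu(B)=\lim_{n\to\infty}|B\cap P_n|/|P_n|$. Programs compute partial functions on $\mathbb{N}$ with input given in unary: input $m$ is a block of $1$s of length determined by $m$ starting at cell $0$, followed by $0$s; the domain of the function computed by $p$ is the set of inputs on which $p$ halts. FIN is the set of programs whose computed function has finite domain; COF is the set of programs whose computed function has cofinite domain. *)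

theory Defs
  imports Complex_Main "HOL-Library.FuncSet"
begin

text \<open>Turing machines on a one-way infinite binary tape (cells 0,1,2,...).
  States of an n-state program are 0,...,n-1 (state 0 is the start state q1);
  the halt state is represented by None.  Symbols 0/1 are False/True.\<close>

datatype dir = L | R

type_synonym instr = "nat option \<times> bool \<times> dir"
type_synonym program = "nat \<times> bool \<Rightarrow> instr"

definition instrs :: "nat \<Rightarrow> instr set" where
  "instrs n = {(r, j, d). case r of None \<Rightarrow> True | Some q \<Rightarrow> q < n}"

text \<open>The set P_n of all n-state programs (functions Q x {0,1} -> (Q u {halt}) x {0,1} x {L,R}),
  represented extensionally so that they form a finite set.\<close>
definition programs :: "nat \<Rightarrow> program set" where
  "programs n = ({0..<n} \<times> UNIV) \<rightarrow>\<^sub>E instrs n"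

datatype status = Running nat | Halted | Fell

type_synonym config = "status \<times> (nat \<Rightarrow> bool) \<times> nat"

fun step :: "program \<Rightarrow> config \<Rightarrow> config" where
  "step p (Running q, t, h) =
     (case p (q, t h) of (r, j, d) \<Rightarrow>
        (if d = L \<and> h = 0 then (Fell, t(h := j), h)
         else (case r of None \<Rightarrow> Halted | Some r' \<Rightarrow> Running r',
               t(h := j), if d = L then h - 1 else h + 1)))"
| "step p (Halted, t, h) = (Halted, t, h)"
| "step p (Fell, t, h) = (Fell, t, h)"

text \<open>Input m in unary: m ones starting at cell 0, followed by zeros.\<close>
definition input :: "nat \<Rightarrow> nat \<Rightarrow> bool" where
  "input m = (\<lambda>i. i < m)"

definition halts :: "program \<Rightarrow> nat \<Rightarrow> bool" where
  "halts p m \<longleftrightarrow> (\<exists>k. fst ((step p ^^ k) (Running 0, input m, 0)) = Halted)"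

definition dom_prog :: "program \<Rightarrow> nat set" where
  "dom_prog p = {m. halts p m}"

definition FIN :: "program set" where
  "FIN = {p. finite (dom_prog p)}"

definition COF :: "program set" where
  "COF = {p. finite (UNIV - dom_prog p)}"

definition has_asym_prob :: "program set \<Rightarrow> real \<Rightarrow> bool" where
  "has_asym_prob B c \<longleftrightarrow>
     (\<lambda>n. real (card (B \<inter> programs n)) / real (card (programs n))) \<longlonglongrightarrow> c"

end

theory Submission
  imports Defs
begin

text \<open>Run a program on the tape of all ones.  If it falls off within \<open>T\<close> steps, then on every
  input \<open>m \<ge> T\<close> it behaves identically for \<open>T\<close> steps (the head cannot leave the block of ones in
  time) and falls off as well, so its domain lies below \<open>T\<close> and it belongs to FIN.

  For a random \<open>n\<close>-state program, as long as the run keeps entering new states the instructions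
  it reads are independent and uniform, so the head performs a simple symmetric random walk,
  which by recurrence survives \<open>T\<close> steps only with a probability \<open>p\<^sub>T\<close> tending to \<open>0\<close>.  The
  run stops entering new states at step \<open>s + 1\<close> without falling off only if the random target
  is the halt state or one of the \<open>s + 1\<close> states already seen, which has probability
  \<open>(s + 2) / (n + 1)\<close>.  Hence all but a fraction \<open>p\<^sub>T + T (T + 1) / (n + 1)\<close> of the programs
  are in FIN; COF, being disjoint from FIN, has density \<open>0\<close>.\<close>

section \<open>Simple random walk\<close>

fun never_falls :: "nat \<Rightarrow> dir list \<Rightarrow> bool" where
  "never_falls x [] = True"
| "never_falls x (R # ds) = never_falls (Suc x) ds"
| "never_falls x (L # ds) = (0 < x \<and> never_falls (x - 1) ds)"

text \<open>The probability that a simple symmetric random walk started at \<open>x\<close> does not step below \<open>0\<close>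
  during \<open>T\<close> steps.\<close>
fun survival_prob :: "nat \<Rightarrow> nat \<Rightarrow> real" where
  "survival_prob 0 x = 1"
| "survival_prob (Suc T) x =
     (survival_prob T (Suc x) + (if 0 < x then survival_prob T (x - 1) else 0)) / 2"

declare survival_prob.simps(2) [simp del]

lemma survival_prob_bounds: "0 \<le> survival_prob T x \<and> survival_prob T x \<le> 1"
proof (induction T arbitrary: x)
  case (Suc T)
  show ?case
    using Suc.IH[of "Suc x"] Suc.IH[of "x - 1"]
    unfolding survival_prob.simps(2)[of T x] by auto
qed simp

lemma survival_prob_Suc_le: "survival_prob (Suc T) x \<le> survival_prob T x"
proof (induction T arbitrary: x)
  case 0
  show ?case using survival_prob_bounds[of 0] by (simp add: survival_prob.simps(2))
next
  case (Suc T)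
  show ?case
    using Suc.IH[of "Suc x"] Suc.IH[of "x - 1"]
    unfolding survival_prob.simps(2)[of "Suc T" x] survival_prob.simps(2)[of T x] by auto
qed

lemma survival_prob_antimono: "T1 \<le> T2 \<Longrightarrow> survival_prob T2 x \<le> survival_prob T1 x"
  by (induction T2 rule: dec_induct) (auto intro: order_trans[OF survival_prob_Suc_le])

text \<open>A walk from \<open>x + 1\<close> falls within \<open>T1 + T2\<close> steps if it reaches \<open>0\<close> within \<open>T1\<close> steps
  (as often as a walk from \<open>x\<close> falls within \<open>T1\<close> steps) and then falls within \<open>T2\<close> further
  steps.\<close>
lemma survival_prob_supermult:
  "(1 - survival_prob T1 x) * (1 - survival_prob T2 0) \<le> 1 - survival_prob (T1 + T2) (Suc x)"
proof (induction T1 arbitrary: x)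
  case 0
  then show ?case using survival_prob_bounds[of T2 "Suc x"] by simp
next
  case (Suc T1)
  define f where "f = 1 - survival_prob T2 0"
  have right: "(1 - survival_prob T1 (Suc x)) * f \<le> 1 - survival_prob (T1 + T2) (Suc (Suc x))"
    using Suc.IH unfolding f_def .
  have left:
    "(if 0 < x then 1 - survival_prob T1 (x - 1) else 1) * f \<le> 1 - survival_prob (T1 + T2) x"
  proof (cases "0 < x")
    case True
    then show ?thesis using Suc.IH[of "x - 1"] by (simp add: f_def)
  next
    case False
    then show ?thesis using survival_prob_antimono[of T2 "T1 + T2" 0] by (simp add: f_def)
  qed
  have "(1 - survival_prob (Suc T1) x) * f
      = ((1 - survival_prob T1 (Suc x)) * f
          + (if 0 < x then 1 - survival_prob T1 (x - 1) else 1) * f) / 2"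
    by (simp add: survival_prob.simps(2) field_simps)
  also have "\<dots>
      \<le> ((1 - survival_prob (T1 + T2) (Suc (Suc x))) + (1 - survival_prob (T1 + T2) x)) / 2"
    using right left by simp
  also have "\<dots> = 1 - survival_prob (Suc T1 + T2) (Suc x)"
    by (simp add: survival_prob.simps(2) field_simps)
  finally show ?case unfolding f_def .
qed

text \<open>The failure probability \<open>g T = 1 - survival_prob T 0\<close>
  increases to some limit \<open>l\<close>, and the case \<open>T1 = T2\<close> of supermultiplicativity gives
  \<open>g (2T + 1) \<ge> (1 + g T\<^sup>2) / 2\<close>, hence \<open>l \<ge> (1 + l\<^sup>2) / 2\<close>, i.e. \<open>l = 1\<close>.\<close>
lemma survival_prob_tendsto_0: "(\<lambda>T. survival_prob T 0) \<longlonglongrightarrow> 0"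
proof -
  define g where "g T = 1 - survival_prob T 0" for T
  have "incseq g"
    unfolding g_def by (intro incseq_SucI) (simp add: survival_prob_Suc_le)
  moreover have "bdd_above (range g)"
    using survival_prob_bounds by (auto simp: g_def intro!: bdd_aboveI[of _ 1])
  ultimately have lim: "g \<longlonglongrightarrow> (SUP T. g T)"
    by (rule LIMSEQ_incseq_SUP[rotated])
  define l where "l = (SUP T. g T)"
  have "(1 + g T ^ 2) / 2 \<le> l" for T
  proof -
    have "(1 - survival_prob T 0) * (1 - survival_prob T 0) \<le> 1 - survival_prob (T + T) (Suc 0)"
      by (rule survival_prob_supermult)
    then have "(1 + g T ^ 2) / 2 \<le> g (Suc (T + T))"
      by (simp add: g_def power2_eq_square survival_prob.simps(2))
    also have "\<dots> \<le> l"
      unfolding l_def using incseq_le[OF \<open>incseq g\<close> lim] .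
    finally show ?thesis .
  qed
  moreover have "(\<lambda>T. (1 + g T ^ 2) / 2) \<longlonglongrightarrow> (1 + l ^ 2) / 2"
    using lim unfolding l_def by (intro tendsto_intros) auto
  ultimately have "(1 + l ^ 2) / 2 \<le> l"
    by (intro LIMSEQ_le_const2) auto
  then have "(l - 1) ^ 2 \<le> 0"
    by (simp add: power2_eq_square algebra_simps)
  then have "l = 1" by simp
  then have "(\<lambda>T. 1 - g T) \<longlonglongrightarrow> 0"
    using lim unfolding l_def by (intro tendsto_eq_intros) auto
  then show ?thesis by (simp add: g_def)
qed

lemma card_never_falls_le:
  fixes f :: "'a \<Rightarrow> dir"
  assumes V: "finite V" and cR: "card {v \<in> V. f v = R} = c" and cL: "card {v \<in> V. f v = L} = c"
  shows "real (card {ws. set ws \<subseteq> V \<and> length ws = T \<and> never_falls x (map f ws)})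
    \<le> (2 * real c) ^ T * survival_prob T x"
proof (induction T arbitrary: x)
  case 0
  have "{ws. set ws \<subseteq> V \<and> length ws = 0 \<and> never_falls x (map f ws)} = {[]}" by auto
  then show ?case by simp
next
  case (Suc T)
  define A where "A y = {ws. set ws \<subseteq> V \<and> length ws = T \<and> never_falls y (map f ws)}" for y
  define VR where "VR = {v \<in> V. f v = R}"
  define VL where "VL = {v \<in> V. f v = L \<and> 0 < x}"
  have fin: "finite (A y)" "finite VR" "finite VL" for y
    using V finite_lists_length_eq[OF V, of T]
    by (auto simp: A_def VR_def VL_def elim: finite_subset[rotated])
  have "{ws. set ws \<subseteq> V \<and> length ws = Suc T \<and> never_falls x (map f ws)}
      \<subseteq> case_prod Cons ` (VR \<times> A (Suc x)) \<union> case_prod Cons ` (VL \<times> A (x - 1))"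
  proof
    fix ws assume "ws \<in> {ws. set ws \<subseteq> V \<and> length ws = Suc T \<and> never_falls x (map f ws)}"
    then obtain v ws' where "ws = v # ws'" "v \<in> V" "set ws' \<subseteq> V" "length ws' = T"
      "never_falls x (f v # map f ws')"
      by (auto simp: length_Suc_conv)
    then show "ws \<in> case_prod Cons ` (VR \<times> A (Suc x)) \<union> case_prod Cons ` (VL \<times> A (x - 1))"
      by (cases "f v") (auto simp: A_def VR_def VL_def)
  qed
  then have "card {ws. set ws \<subseteq> V \<and> length ws = Suc T \<and> never_falls x (map f ws)}
      \<le> card (case_prod Cons ` (VR \<times> A (Suc x)) \<union> case_prod Cons ` (VL \<times> A (x - 1)))"
    using fin by (intro card_mono) auto
  also have "\<dots> \<le> card (VR \<times> A (Suc x)) + card (VL \<times> A (x - 1))"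
    by (intro order_trans[OF card_Un_le] add_mono card_image_le) (use fin in auto)
  finally have "card {ws. set ws \<subseteq> V \<and> length ws = Suc T \<and> never_falls x (map f ws)}
      \<le> card VR * card (A (Suc x)) + card VL * card (A (x - 1))"
    by (simp add: card_cartesian_product)
  moreover have "card VR = c" "card VL = (if 0 < x then c else 0)"
    using cR cL by (auto simp: VR_def VL_def)
  ultimately have "real (card {ws. set ws \<subseteq> V \<and> length ws = Suc T \<and> never_falls x (map f ws)})
      \<le> real c * card (A (Suc x)) + (if 0 < x then real c * card (A (x - 1)) else 0)"
    by (simp split: if_splits flip: of_nat_mult of_nat_add)
  also have "\<dots> \<le> real c * ((2 * real c) ^ T * survival_prob T (Suc x))
      + (if 0 < x then real c * ((2 * real c) ^ T * survival_prob T (x - 1)) else 0)"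
    using Suc.IH unfolding A_def by (intro add_mono) (auto intro: mult_left_mono)
  also have "\<dots> = (2 * real c) ^ Suc T * survival_prob (Suc T) x"
    by (simp add: survival_prob.simps(2) field_simps)
  finally show ?case .
qed

section \<open>Falling off the all-ones tape\<close>

lemma step_stopped: "(\<nexists>q. fst c = Running q) \<Longrightarrow> step p c = c"
  by (cases c) (metis fst_conv status.exhaust step.simps(2,3))

lemma funpow_step_stopped: "(\<nexists>q. fst c = Running q) \<Longrightarrow> (step p ^^ k) c = c"
  by (induction k) (simp_all add: step_stopped)

lemma funpow_le_split: "i \<le> j \<Longrightarrow> (f ^^ j) x = (f ^^ (j - i)) ((f ^^ i) x)"
  by (metis funpow_add le_add_diff_inverse2 o_apply)

lemma Fell_not_Halted:
  assumes "fst ((step p ^^ i) c) = Fell"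
  shows "fst ((step p ^^ j) c) \<noteq> Halted"
proof (cases "i \<le> j")
  case True
  with assms show ?thesis
    by (simp add: funpow_le_split[of i j] funpow_step_stopped)
next
  case False
  with assms show ?thesis
    using funpow_le_split[of j i "step p" c] by (auto simp: funpow_step_stopped)
qed

definition ones_config :: config where
  "ones_config = (Running 0, \<lambda>_. True, 0)"

definition run_ones :: "program \<Rightarrow> nat \<Rightarrow> config" where
  "run_ones p k = (step p ^^ k) ones_config"

lemma run_ones_Fell_mono:
  assumes "fst (run_ones p i) = Fell" "i \<le> j"
  shows "fst (run_ones p j) = Fell"
  using assms funpow_le_split[OF assms(2), of "step p" ones_config]
  by (simp add: run_ones_def funpow_step_stopped)

lemma step_agree_below:
  assumes "h < m" "\<forall>i<m. t1 i = t2 i"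
  shows "\<exists>s' t1' t2' h'. step p (s, t1, h) = (s', t1', h') \<and> step p (s, t2, h) = (s', t2', h')
    \<and> h' \<le> Suc h \<and> (\<forall>i<m. t1' i = t2' i)"
proof (cases s)
  case (Running q)
  have "t1 h = t2 h" using assms by simp
  with assms show ?thesis
    by (cases "p (q, t2 h)") (auto simp: Running split: option.splits)
qed (use assms in auto)

lemma run_input_agrees_run_ones:
  assumes "k \<le> m"
  shows "fst ((step p ^^ k) (Running 0, input m, 0)) = fst (run_ones p k)"
proof -
  have "\<exists>s t1 t2 h. (step p ^^ k) (Running 0, input m, 0) = (s, t1, h) \<and> run_ones p k = (s, t2, h)
      \<and> h \<le> k \<and> (\<forall>i<m. t1 i = t2 i)"
    using assms
  proof (induction k)
    case 0
    show ?case by (simp add: run_ones_def ones_config_def input_def)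
  next
    case (Suc k)
    then obtain s t1 t2 h where "(step p ^^ k) (Running 0, input m, 0) = (s, t1, h)"
      "run_ones p k = (s, t2, h)" "h \<le> k" "\<forall>i<m. t1 i = t2 i"
      by auto
    then show ?case
      using step_agree_below[of h m t1 t2 p s] Suc.prems
      by (fastforce simp: run_ones_def)
  qed
  then show ?thesis by auto
qed

lemma Fell_imp_FIN:
  assumes "fst (run_ones p T) = Fell"
  shows "p \<in> FIN"
proof -
  have "dom_prog p \<subseteq> {..<T}"
  proof
    fix m assume "m \<in> dom_prog p"
    then obtain k where "fst ((step p ^^ k) (Running 0, input m, 0)) = Halted"
      by (auto simp: dom_prog_def halts_def)
    moreover have "fst ((step p ^^ T) (Running 0, input m, 0)) = Fell" if "T \<le> m"
      using run_input_agrees_run_ones[OF that] assms by simp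
    ultimately show "m \<in> {..<T}"
      using Fell_not_Halted by (meson lessThan_iff not_le)
  qed
  then show ?thesis unfolding FIN_def by (simp add: finite_subset)
qed

section \<open>Replaying instruction words\<close>

text \<open>The dummy state \<open>0\<close> of a stopped configuration is harmless: \<^const>\<open>step\<close> then ignores the
  program.\<close>
definition state :: "config \<Rightarrow> nat" where
  "state c = (case fst c of Running q \<Rightarrow> q | _ \<Rightarrow> 0)"

definition key :: "config \<Rightarrow> nat \<times> bool" where
  "key c = (state c, fst (snd c) (snd (snd c)))"

definition step_instr :: "instr \<Rightarrow> config \<Rightarrow> config" where
  "step_instr v = step (\<lambda>_. v)"

lemma step_eq_step_instr: "step p c = step_instr (p (key c)) c"
proof -
  obtain s t h where "c = (s, t, h)" by (cases c)
  then show ?thesis by (cases s) (auto simp: step_instr_def key_def state_def split: prod.splits)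
qed

lemma state_step_instr_less:
  assumes "state c < n" "v \<in> instrs n"
  shows "state (step_instr v c) < n"
proof -
  obtain s t h where c: "c = (s, t, h)" by (cases c)
  obtain r j d where v: "v = (r, j, d)" by (cases v)
  show ?thesis
    using assms unfolding c v instrs_def
    by (cases s) (auto simp: step_instr_def state_def split: option.splits)
qed

lemma step_instr_target:
  assumes "fst c = Running q" "fst (step_instr v c) \<noteq> Fell"
  shows "fst (step_instr v c) = (case fst v of None \<Rightarrow> Halted | Some r \<Rightarrow> Running r)"
proof -
  obtain t h where c: "c = (Running q, t, h)" using assms(1) by (cases c) auto
  obtain r j d where v: "v = (r, j, d)" by (cases v)
  show ?thesis
    using assms(2) unfolding c v by (auto simp: step_instr_def split: if_splits option.splits)
qed

definition trace :: "program \<Rightarrow> nat \<Rightarrow> instr list" where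
  "trace p k = map (\<lambda>i. p (key (run_ones p i))) [0..<k]"

fun path :: "config \<Rightarrow> instr list \<Rightarrow> config list" where
  "path c [] = [c]"
| "path c (v # ws) = c # path (step_instr v c) ws"

lemma length_path [simp]: "length (path c ws) = Suc (length ws)"
  by (induction ws arbitrary: c) auto

lemma path_not_Nil [simp]: "path c ws \<noteq> []"
  by (cases ws) auto

lemma path_snoc: "path c (ws @ [v]) = path c ws @ [step_instr v (last (path c ws))]"
  by (induction ws arbitrary: c) auto

lemma path_trace: "path ones_config (trace p k) = map (run_ones p) [0..<Suc k]"
proof (induction k)
  case 0
  show ?case by (simp add: trace_def run_ones_def)
next
  case (Suc k)
  have "trace p (Suc k) = trace p k @ [p (key (run_ones p k))]"
    by (simp add: trace_def)
  with Suc.IH show ?case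
    by (simp add: path_snoc run_ones_def del: upt_Suc) (simp add: step_eq_step_instr)
qed

definition key_at :: "instr list \<Rightarrow> nat \<Rightarrow> nat \<times> bool" where
  "key_at ws i = key (path ones_config ws ! i)"

lemma length_trace [simp]: "length (trace p k) = k"
  by (simp add: trace_def)

lemma key_at_trace: "i \<le> k \<Longrightarrow> key_at (trace p k) i = key (run_ones p i)"
  by (simp add: key_at_def path_trace nth_append del: upt_Suc)

lemma key_at_trace_follows: "i < k \<Longrightarrow> p (key_at (trace p k) i) = trace p k ! i"
  using key_at_trace[of i k p] by (simp add: trace_def)

lemma program_key_mem:
  "p \<in> programs n \<Longrightarrow> state c < n \<Longrightarrow> p (key c) \<in> instrs n"
  unfolding programs_def key_def by (rule PiE_mem) auto

lemma state_run_ones_less: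
  assumes "p \<in> programs n" "0 < n"
  shows "state (run_ones p k) < n"
proof (induction k)
  case 0
  show ?case using assms(2) by (simp add: run_ones_def ones_config_def state_def)
next
  case (Suc k)
  have "p (key (run_ones p k)) \<in> instrs n"
    using assms(1) Suc.IH by (rule program_key_mem)
  with Suc.IH show ?case
    by (simp add: run_ones_def step_eq_step_instr state_step_instr_less)
qed

lemma set_trace_subset:
  "p \<in> programs n \<Longrightarrow> 0 < n \<Longrightarrow> set (trace p k) \<subseteq> instrs n"
  using program_key_mem[OF _ state_run_ones_less] by (simp add: trace_def image_subset_iff)

lemma state_path_less:
  "state c < n \<Longrightarrow> set ws \<subseteq> instrs n \<Longrightarrow> c' \<in> set (path c ws) \<Longrightarrow> state c' < n"
proof (induction ws arbitrary: c)
  case (Cons v ws)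
  have "v \<in> instrs n" "set ws \<subseteq> instrs n"
    using Cons.prems(2) by auto
  with Cons.prems(1) have "state (step_instr v c) < n"
    by (intro state_step_instr_less)
  then show ?case
    using Cons.IH[OF _ \<open>set ws \<subseteq> instrs n\<close>] Cons.prems(1,3) by (cases "c' = c") simp_all
qed simp

lemma key_at_mem:
  assumes "set ws \<subseteq> instrs n" "0 < n" "i \<le> length ws"
  shows "key_at ws i \<in> {0..<n} \<times> UNIV"
proof -
  have "path ones_config ws ! i \<in> set (path ones_config ws)"
    using assms(3) by (simp add: less_Suc_eq_le)
  moreover have "state ones_config < n"
    using assms(2) by (simp add: ones_config_def state_def)
  ultimately have "state (path ones_config ws ! i) < n"
    using assms(1) state_path_less by blast
  then show ?thesis by (simp add: key_at_def key_def)
qed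

definition dir_of :: "instr \<Rightarrow> dir" where
  "dir_of v = snd (snd v)"

lemma running_path_never_falls:
  "\<forall>c' \<in> set (path c ws). \<exists>q. fst c' = Running q \<Longrightarrow> never_falls (snd (snd c)) (map dir_of ws)"
proof (induction ws arbitrary: c)
  case (Cons v ws)
  obtain s t h where c: "c = (s, t, h)" by (cases c)
  obtain r j d where v: "v = (r, j, d)" by (cases v)
  from Cons.prems obtain q q' where "s = Running q" "fst (step_instr v c) = Running q'"
    by (cases ws) (auto simp: c)
  moreover have "never_falls (snd (snd (step_instr v c))) (map dir_of ws)"
    using Cons by simp
  moreover have "dir_of v = d"
    by (simp add: v dir_of_def)
  ultimately show ?case
    by (cases d) (auto simp: c v step_instr_def split: if_splits option.splits)
qed simp

text \<open>Along a fresh word the program is consulted at pairwise distinct arguments, so the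
  instructions it reads are independent.\<close>
definition fresh :: "instr list \<Rightarrow> bool" where
  "fresh ws \<longleftrightarrow> (\<forall>c \<in> set (path ones_config ws). \<exists>q. fst c = Running q)
      \<and> distinct (map fst (path ones_config ws))"

lemma fresh_Nil: "fresh []"
  by (simp add: fresh_def ones_config_def)

lemma fresh_never_falls: "fresh ws \<Longrightarrow> never_falls 0 (map dir_of ws)"
  using running_path_never_falls[of ones_config ws] by (simp add: fresh_def ones_config_def)

lemma inj_on_key_at:
  assumes "fresh ws"
  shows "inj_on (key_at ws) {..length ws}"
proof
  fix i j assume ij: "i \<in> {..length ws}" "j \<in> {..length ws}" and "key_at ws i = key_at ws j"
  then have "state (path ones_config ws ! i) = state (path ones_config ws ! j)"
    by (simp add: key_at_def key_def)
  moreover have "\<exists>q. fst (path ones_config ws ! k) = Running q" if "k \<in> {..length ws}" for k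
    using assms that by (auto simp: fresh_def less_Suc_eq_le)
  then obtain qi qj where "fst (path ones_config ws ! i) = Running qi"
      "fst (path ones_config ws ! j) = Running qj"
    using ij by blast
  ultimately have "fst (path ones_config ws ! i) = fst (path ones_config ws ! j)"
    by (simp add: state_def)
  moreover have "distinct (map fst (path ones_config ws))"
    using assms by (simp add: fresh_def)
  ultimately show "i = j"
    using ij nth_eq_iff_index_eq[of "map fst (path ones_config ws)" i j] by simp
qed

lemma fresh_snoc:
  "fresh (ws @ [v]) \<longleftrightarrow> fresh ws \<and> (\<exists>q. fst (step_instr v (last (path ones_config ws))) = Running q)
    \<and> fst (step_instr v (last (path ones_config ws))) \<notin> fst ` set (path ones_config ws)"
  by (auto simp: fresh_def path_snoc)

text \<open>The instruction targets that end a fresh run without falling off: halting, or a state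
  visited before.\<close>
definition stale_targets :: "instr list \<Rightarrow> nat option set" where
  "stale_targets ws = insert None (Some ` state ` set (path ones_config ws))"

lemma fresh_trace_ends_stale:
  assumes fresh: "fresh (trace p s)" and not_fresh: "\<not> fresh (trace p (Suc s))"
    and not_Fell: "fst (run_ones p (Suc s)) \<noteq> Fell"
  shows "fst (p (key (run_ones p s))) \<in> stale_targets (trace p s)"
proof -
  define v where "v = p (key (run_ones p s))"
  define P where "P = path ones_config (trace p s)"
  have last: "last P = run_ones p s"
    by (simp add: P_def path_trace)
  have step_s: "step_instr v (run_ones p s) = run_ones p (Suc s)"
    by (simp add: v_def run_ones_def step_eq_step_instr)
  have "trace p (Suc s) = trace p s @ [v]"
    by (simp add: trace_def v_def)
  with not_fresh have "\<not> fresh (trace p s @ [v])"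
    by simp
  then have stale: "fst (run_ones p (Suc s)) \<in> fst ` set P
      \<or> (\<nexists>q. fst (run_ones p (Suc s)) = Running q)"
    using fresh unfolding fresh_snoc P_def[symmetric] last step_s by blast
  from fresh obtain q where "fst (run_ones p s) = Running q"
    using last last_in_set[of P] by (auto simp: fresh_def P_def)
  then have target: "fst (run_ones p (Suc s)) = (case fst v of None \<Rightarrow> Halted | Some r \<Rightarrow> Running r)"
    using step_instr_target[of "run_ones p s" q v] not_Fell by (simp add: step_s)
  show ?thesis
  proof (cases "fst v")
    case (Some r)
    with stale target obtain c where "c \<in> set P" "fst c = Running r"
      by auto
    then have "Some r \<in> Some ` state ` set P"
      by (force simp: state_def)
    with Some show ?thesis
      by (simp add: stale_targets_def v_def P_def)
  qed (simp add: stale_targets_def v_def)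
qed

section \<open>Counting programs\<close>

lemma UNIV_dir: "(UNIV :: dir set) = {L, R}"
  using dir.exhaust by auto

instance dir :: finite
  by standard (simp add: UNIV_dir)

lemma instrs_eq: "instrs n = insert None (Some ` {..<n}) \<times> UNIV \<times> UNIV"
  unfolding instrs_def by (auto split: option.splits)

lemma finite_instrs [simp]: "finite (instrs n)"
  unfolding instrs_eq by simp

lemma card_instrs: "card (instrs n) = 4 * (n + 1)"
  unfolding instrs_eq by (simp add: UNIV_dir card_cartesian_product card_image)

lemma card_instrs_dir: "card {v \<in> instrs n. dir_of v = d} = 2 * (n + 1)"
proof -
  have "{v \<in> instrs n. dir_of v = d} = insert None (Some ` {..<n}) \<times> UNIV \<times> {d}"
    unfolding instrs_eq dir_of_def by auto
  then show ?thesis by (simp add: card_cartesian_product card_image)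
qed

lemma finite_programs [simp]: "finite (programs n)"
  unfolding programs_def by (intro finite_PiE) auto

lemma card_programs: "card (programs n) = (4 * (n + 1)) ^ (2 * n)"
  unfolding programs_def by (simp add: card_PiE card_instrs card_cartesian_product)

lemma card_PiE_constrained_le:
  assumes "finite D" "finite V" "inj_on \<kappa> {..<m}" "\<kappa> ` {..<m} \<subseteq> D" "\<And>i. i < m \<Longrightarrow> finite (U i)"
  shows "card {p \<in> PiE D (\<lambda>_. V). \<forall>i<m. p (\<kappa> i) \<in> U i}
    \<le> (\<Prod>i<m. card (U i)) * card V ^ (card D - m)"
proof -
  let ?K = "\<kappa> ` {..<m}"
  define B where "B k = (if k \<in> ?K then U (the_inv_into {..<m} \<kappa> k) else V)" for k
  have B_\<kappa>: "B (\<kappa> i) = U i" if "i < m" for i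
    using that assms(3) by (simp add: B_def the_inv_into_f_f)
  have "finite (B k)" for k
    using assms(2,5) the_inv_into_into[OF assms(3), of k "{..<m}"] unfolding B_def by auto
  moreover have "{p \<in> PiE D (\<lambda>_. V). \<forall>i<m. p (\<kappa> i) \<in> U i} \<subseteq> PiE D B"
    by (auto simp: PiE_iff B_def extensional_def the_inv_into_f_f[OF assms(3)])
  ultimately have "card {p \<in> PiE D (\<lambda>_. V). \<forall>i<m. p (\<kappa> i) \<in> U i} \<le> card (PiE D B)"
    using assms(1) by (intro card_mono finite_PiE) auto
  also have "\<dots> = (\<Prod>k\<in>D - ?K. card (B k)) * (\<Prod>k\<in>?K. card (B k))"
    using assms(1,4) by (simp add: card_PiE prod.subset_diff)
  also have "(\<Prod>k\<in>?K. card (B k)) = (\<Prod>i<m. card (U i))"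
    using assms(3) by (simp add: prod.reindex B_\<kappa>)
  also have "(\<Prod>k\<in>D - ?K. card (B k)) = card V ^ (card D - m)"
    using assms(1,3,4) by (simp add: B_def card_Diff_subset card_image)
  finally show ?thesis by (simp add: mult.commute)
qed

lemma card_UN_le_mult:
  assumes "finite I" "\<And>i. i \<in> I \<Longrightarrow> card (A i) \<le> b"
  shows "card (\<Union>i\<in>I. A i) \<le> card I * b"
  using card_UN_le[OF assms(1), of A] sum_bounded_above[of I "\<lambda>i. card (A i)" b] assms(2) by simp

text \<open>The programs that, started on the all-ones tape, first execute the instructions \<open>ws\<close> and then
  an instruction from \<open>U\<close>.\<close>
definition cylinder :: "nat \<Rightarrow> instr list \<Rightarrow> instr set \<Rightarrow> program set" where
  "cylinder n ws U = {p \<in> programs n. (\<forall>i<length ws. p (key_at ws i) = ws ! i)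
      \<and> p (key_at ws (length ws)) \<in> U}"

lemma card_cylinder_le:
  assumes "0 < n" "set ws \<subseteq> instrs n" "fresh ws" "finite U"
  shows "card (cylinder n ws U) \<le> card U * (4 * (n + 1)) ^ (2 * n - Suc (length ws))"
proof -
  define U' where "U' i = (if i < length ws then {ws ! i} else U)" for i
  have "cylinder n ws U
      = {p \<in> PiE ({0..<n} \<times> UNIV) (\<lambda>_. instrs n). \<forall>i<Suc (length ws). p (key_at ws i) \<in> U' i}"
    by (auto simp: cylinder_def programs_def U'_def less_Suc_eq)
  also have "card \<dots> \<le> (\<Prod>i<Suc (length ws). card (U' i))
      * card (instrs n) ^ (card ({0..<n} \<times> (UNIV :: bool set)) - Suc (length ws))"
  proof (rule card_PiE_constrained_le)
    show "inj_on (key_at ws) {..<Suc (length ws)}"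
      using inj_on_key_at[OF assms(3)] by (simp add: lessThan_Suc_atMost)
    show "key_at ws ` {..<Suc (length ws)} \<subseteq> {0..<n} \<times> UNIV"
      using key_at_mem[OF assms(2,1)] by (intro image_subsetI) simp
  qed (use assms(4) in \<open>auto simp: U'_def\<close>)
  also have "(\<Prod>i<Suc (length ws). card (U' i)) = card U"
    by (simp add: U'_def)
  finally show ?thesis
    by (simp add: card_instrs card_cartesian_product mult.commute)
qed

lemma cylinder_trace:
  assumes "p \<in> programs n" "0 < n" "fst (p (key (run_ones p k))) \<in> S"
  shows "p \<in> cylinder n (trace p k) {v \<in> instrs n. fst v \<in> S}"
  using assms program_key_mem[OF assms(1) state_run_ones_less[OF assms(1,2)]]
    key_at_trace[of k k p] key_at_trace_follows[of _ k p]
  by (simp add: cylinder_def)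

definition fresh_words :: "nat \<Rightarrow> nat \<Rightarrow> instr list set" where
  "fresh_words n k = {ws. set ws \<subseteq> instrs n \<and> length ws = k \<and> fresh ws}"

lemma finite_fresh_words: "finite (fresh_words n k)"
  unfolding fresh_words_def
  by (rule finite_subset[OF _ finite_lists_length_eq[OF finite_instrs, of n k]]) auto

lemma card_fresh_words_le_power: "card (fresh_words n k) \<le> (4 * (n + 1)) ^ k"
proof -
  have "card (fresh_words n k) \<le> card {ws. set ws \<subseteq> instrs n \<and> length ws = k}"
    unfolding fresh_words_def by (intro card_mono finite_lists_length_eq) auto
  then show ?thesis by (simp add: card_lists_length_eq card_instrs)
qed

text \<open>Half of the instructions move the head to the left, and along a fresh word the head never
  falls off.\<close>
lemma card_fresh_words_le:
  "real (card (fresh_words n k)) \<le> real (4 * (n + 1)) ^ k * survival_prob k 0"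
proof -
  have "card (fresh_words n k)
      \<le> card {ws. set ws \<subseteq> instrs n \<and> length ws = k \<and> never_falls 0 (map dir_of ws)}"
    unfolding fresh_words_def using fresh_never_falls
    by (intro card_mono finite_subset[OF _ finite_lists_length_eq[OF finite_instrs, of n k]]) auto
  also have "real \<dots> \<le> (2 * real (2 * (n + 1))) ^ k * survival_prob k 0"
    by (rule card_never_falls_le) (simp_all add: card_instrs_dir)
  finally show ?thesis by simp
qed

lemma card_stale_instrs_le:
  "card {v \<in> instrs n. fst v \<in> stale_targets ws} \<le> 4 * (length ws + 2)"
proof -
  have "card (Some ` state ` set (path ones_config ws)) \<le> length (path ones_config ws)"
    by (intro order_trans[OF card_image_le] card_length) simp_all
  then have "card (stale_targets ws) \<le> length ws + 2"
    unfolding stale_targets_def by (simp add: card_insert_if)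
  have "card {v \<in> instrs n. fst v \<in> stale_targets ws}
      \<le> card (stale_targets ws \<times> (UNIV :: bool set) \<times> (UNIV :: dir set))"
    by (intro card_mono) (auto simp: stale_targets_def)
  also have "\<dots> = card (stale_targets ws) * 4"
    by (simp add: card_cartesian_product UNIV_dir)
  also have "\<dots> \<le> (length ws + 2) * 4"
    using \<open>card (stale_targets ws) \<le> length ws + 2\<close> by simp
  finally show ?thesis by simp
qed

definition fresh_programs :: "nat \<Rightarrow> nat \<Rightarrow> program set" where
  "fresh_programs n k = {p \<in> programs n. fresh (trace p k)}"

definition first_stale_programs :: "nat \<Rightarrow> nat \<Rightarrow> program set" where
  "first_stale_programs n s = {p \<in> programs n. fresh (trace p s) \<and> \<not> fresh (trace p (Suc s))
      \<and> fst (run_ones p (Suc s)) \<noteq> Fell}"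

lemma card_fresh_programs_le:
  assumes "0 < n" "T \<le> n"
  shows "real (card (fresh_programs n T)) \<le> real (card (programs n)) * survival_prob T 0"
proof -
  define v where "v = 4 * (n + 1)"
  have "fresh_programs n T \<subseteq> (\<Union>ws\<in>fresh_words n T. cylinder n ws (instrs n))"
    using cylinder_trace[of _ n T UNIV] set_trace_subset assms(1)
    by (fastforce simp: fresh_programs_def fresh_words_def)
  then have "card (fresh_programs n T)
      \<le> card (\<Union>ws\<in>fresh_words n T. cylinder n ws (instrs n))"
    by (intro card_mono) (auto simp: finite_fresh_words cylinder_def)
  also have "\<dots> \<le> card (fresh_words n T) * (v * v ^ (2 * n - Suc T))"
  proof (rule card_UN_le_mult[OF finite_fresh_words])
    fix ws assume "ws \<in> fresh_words n T"
    then show "card (cylinder n ws (instrs n)) \<le> v * v ^ (2 * n - Suc T)"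
      using card_cylinder_le[OF assms(1), of ws "instrs n"]
      by (simp add: fresh_words_def card_instrs v_def)
  qed
  also have "v * v ^ (2 * n - Suc T) = v ^ (2 * n - T)"
    using assms by (simp flip: power_Suc add: Suc_diff_Suc)
  finally have "real (card (fresh_programs n T))
      \<le> real (card (fresh_words n T)) * real v ^ (2 * n - T)"
    by (simp flip: of_nat_mult of_nat_power)
  also have "\<dots> \<le> real v ^ T * survival_prob T 0 * real v ^ (2 * n - T)"
    using card_fresh_words_le[of n T] by (simp add: v_def)
  also have "\<dots> = real (card (programs n)) * survival_prob T 0"
    using assms by (simp add: card_programs v_def flip: power_add)
  finally show ?thesis .
qed

lemma card_first_stale_programs_le:
  assumes "0 < n" "s < n"
  shows "card (first_stale_programs n s) * (n + 1) \<le> card (programs n) * (s + 2)"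
proof -
  define v where "v = 4 * (n + 1)"
  define S where "S ws = {u \<in> instrs n. fst u \<in> stale_targets ws}" for ws
  have "first_stale_programs n s \<subseteq> (\<Union>ws\<in>fresh_words n s. cylinder n ws (S ws))"
  proof
    fix p assume "p \<in> first_stale_programs n s"
    then have p: "p \<in> programs n" "fresh (trace p s)" "\<not> fresh (trace p (Suc s))"
      "fst (run_ones p (Suc s)) \<noteq> Fell"
      by (auto simp: first_stale_programs_def)
    have "trace p s \<in> fresh_words n s"
      using set_trace_subset[OF p(1) assms(1)] p(2) by (simp add: fresh_words_def)
    moreover have "p \<in> cylinder n (trace p s) (S (trace p s))"
      using cylinder_trace[OF p(1) assms(1) fresh_trace_ends_stale[OF p(2-4)]] by (simp add: S_def)
    ultimately show "p \<in> (\<Union>ws\<in>fresh_words n s. cylinder n ws (S ws))"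
      by blast
  qed
  then have "card (first_stale_programs n s) \<le> card (\<Union>ws\<in>fresh_words n s. cylinder n ws (S ws))"
    by (intro card_mono) (auto simp: finite_fresh_words cylinder_def)
  also have "\<dots> \<le> card (fresh_words n s) * (4 * (s + 2) * v ^ (2 * n - Suc s))"
  proof (rule card_UN_le_mult[OF finite_fresh_words])
    fix ws assume ws: "ws \<in> fresh_words n s"
    then have "card (cylinder n ws (S ws)) \<le> card (S ws) * v ^ (2 * n - Suc s)"
      using card_cylinder_le[OF assms(1), of ws "S ws"] by (simp add: fresh_words_def S_def v_def)
    also have "\<dots> \<le> 4 * (s + 2) * v ^ (2 * n - Suc s)"
      using ws card_stale_instrs_le[of n ws] by (simp add: fresh_words_def S_def)
    finally show "card (cylinder n ws (S ws)) \<le> 4 * (s + 2) * v ^ (2 * n - Suc s)" .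
  qed
  also have "\<dots> \<le> v ^ s * (4 * (s + 2) * v ^ (2 * n - Suc s))"
    using card_fresh_words_le_power[of n s] by (simp add: v_def)
  finally have "card (first_stale_programs n s) * (n + 1)
      \<le> v ^ s * (4 * (s + 2) * v ^ (2 * n - Suc s)) * (n + 1)"
    by (rule mult_right_mono) simp
  also have "\<dots> = v ^ s * v ^ (2 * n - Suc s) * (4 * (n + 1)) * (s + 2)"
    by (simp only: mult_ac)
  also have "\<dots> = v ^ (Suc s + (2 * n - Suc s)) * (s + 2)"
    unfolding v_def[symmetric] by (simp add: power_add mult_ac)
  also have "\<dots> = card (programs n) * (s + 2)"
    using assms by (simp add: card_programs v_def)
  finally show ?thesis .
qed

lemma not_Fell_subset:
  "{p \<in> programs n. fst (run_ones p T) \<noteq> Fell}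
    \<subseteq> fresh_programs n T \<union> (\<Union>s<T. first_stale_programs n s)"
proof
  fix p assume p: "p \<in> {p \<in> programs n. fst (run_ones p T) \<noteq> Fell}"
  show "p \<in> fresh_programs n T \<union> (\<Union>s<T. first_stale_programs n s)"
  proof (cases "fresh (trace p T)")
    case True
    with p show ?thesis by (simp add: fresh_programs_def)
  next
    case False
    moreover have "fresh (trace p 0)"
      by (simp add: trace_def fresh_Nil)
    ultimately obtain s where s: "s < T" "fresh (trace p s)" "\<not> fresh (trace p (Suc s))"
      using ex_least_nat_less[of "\<lambda>i. \<not> fresh (trace p i)" T] by auto
    moreover have "fst (run_ones p (Suc s)) \<noteq> Fell"
      using p s(1) run_ones_Fell_mono[of p "Suc s" T] by auto
    ultimately have "p \<in> first_stale_programs n s"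
      using p by (simp add: first_stale_programs_def)
    with s(1) show ?thesis by blast
  qed
qed

lemma card_not_Fell_le:
  assumes "0 < n" "T \<le> n"
  shows "real (card {p \<in> programs n. fst (run_ones p T) \<noteq> Fell})
    \<le> real (card (programs n)) * (survival_prob T 0 + real T * (real T + 1) / (real n + 1))"
proof -
  define N where "N = real (card (programs n))"
  have "card {p \<in> programs n. fst (run_ones p T) \<noteq> Fell}
      \<le> card (fresh_programs n T \<union> (\<Union>s<T. first_stale_programs n s))"
    by (intro card_mono not_Fell_subset) (simp_all add: fresh_programs_def first_stale_programs_def)
  also have "\<dots> \<le> card (fresh_programs n T) + (\<Sum>s<T. card (first_stale_programs n s))"
    by (intro order_trans[OF card_Un_le] add_left_mono card_UN_le) simp
  finally have "real (card {p \<in> programs n. fst (run_ones p T) \<noteq> Fell})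
      \<le> real (card (fresh_programs n T)) + (\<Sum>s<T. real (card (first_stale_programs n s)))"
    by (simp flip: of_nat_sum of_nat_add)
  moreover have "real (card (fresh_programs n T)) \<le> N * survival_prob T 0"
    unfolding N_def by (rule card_fresh_programs_le[OF assms])
  moreover have "real (card (first_stale_programs n s)) \<le> N * (real T + 1) / (real n + 1)"
    if "s < T" for s
  proof -
    have "real (card (first_stale_programs n s) * (n + 1)) \<le> real (card (programs n) * (s + 2))"
      unfolding of_nat_le_iff using card_first_stale_programs_le[OF assms(1), of s] that assms(2)
      by linarith
    then have "real (card (first_stale_programs n s)) * (n + 1) \<le> N * (s + 2)"
      by (simp add: N_def algebra_simps)
    also have "\<dots> \<le> N * (real T + 1)"
      using that by (intro mult_left_mono) (auto simp: N_def)
    finally show ?thesis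
      by (simp add: field_simps)
  qed
  then have "(\<Sum>s<T. real (card (first_stale_programs n s)))
      \<le> real T * (N * (real T + 1) / (real n + 1))"
    using sum_bounded_above[of "{..<T}" _ "N * (real T + 1) / (real n + 1)"] by simp
  ultimately have "real (card {p \<in> programs n. fst (run_ones p T) \<noteq> Fell})
      \<le> N * survival_prob T 0 + real T * (N * (real T + 1) / (real n + 1))"
    by linarith
  also have "\<dots> = N * (survival_prob T 0 + real T * (real T + 1) / (real n + 1))"
    by (simp add: algebra_simps)
  finally show ?thesis
    unfolding N_def .
qed

section \<open>Densities\<close>

definition density :: "program set \<Rightarrow> nat \<Rightarrow> real" where
  "density B n = real (card (B \<inter> programs n)) / real (card (programs n))"

lemma has_asym_prob_iff_density: "has_asym_prob B c \<longleftrightarrow> density B \<longlonglongrightarrow> c"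
  unfolding has_asym_prob_def density_def[abs_def] ..

lemma density_le_1: "density B n \<le> 1"
proof -
  have "real (card (B \<inter> programs n)) \<le> real (card (programs n))"
    by (intro of_nat_mono card_mono) auto
  then show ?thesis
    unfolding density_def by (simp add: divide_le_eq_1 card_programs)
qed

lemma density_FIN_lower:
  assumes "0 < n" "T \<le> n"
  shows "1 - survival_prob T 0 - real T * (real T + 1) / (real n + 1) \<le> density FIN n"
proof -
  define N where "N = real (card (programs n))"
  define B where "B = {p \<in> programs n. fst (run_ones p T) \<noteq> Fell}"
  have "programs n \<subseteq> (FIN \<inter> programs n) \<union> B"
    using Fell_imp_FIN by (auto simp: B_def)
  then have "card (programs n) \<le> card ((FIN \<inter> programs n) \<union> B)"
    by (intro card_mono) (simp_all add: B_def)
  also have "\<dots> \<le> card (FIN \<inter> programs n) + card B"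
    by (rule card_Un_le)
  finally have "card (programs n) \<le> card (FIN \<inter> programs n) + card B" .
  then have "N - real (card B) \<le> real (card (FIN \<inter> programs n))"
    unfolding N_def by linarith
  with card_not_Fell_le[OF assms]
  have "N * (1 - survival_prob T 0 - real T * (real T + 1) / (real n + 1))
      \<le> real (card (FIN \<inter> programs n))"
    unfolding N_def B_def by (simp add: algebra_simps)
  moreover have "0 < N"
    by (simp add: N_def card_programs)
  ultimately show ?thesis
    unfolding density_def N_def[symmetric] by (simp add: field_simps)
qed

lemma COF_FIN_disjoint: "COF \<inter> FIN = {}"
proof (intro equals0I)
  fix p assume "p \<in> COF \<inter> FIN"
  then have "finite (UNIV - dom_prog p)" "finite (dom_prog p)"
    by (auto simp: COF_def FIN_def)
  then show False
    using Diff_infinite_finite[of "dom_prog p" UNIV] by simp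
qed

lemma density_COF_le: "density COF n \<le> 1 - density FIN n"
proof -
  have "card (COF \<inter> programs n) + card (FIN \<inter> programs n)
      = card ((COF \<inter> programs n) \<union> (FIN \<inter> programs n))"
    using COF_FIN_disjoint by (intro card_Un_disjoint[symmetric]) auto
  also have "\<dots> \<le> card (programs n)"
    by (intro card_mono) auto
  finally have "real (card (COF \<inter> programs n)) + real (card (FIN \<inter> programs n))
      \<le> real (card (programs n))"
    by linarith
  then show ?thesis
    by (simp add: density_def card_programs field_simps)
qed

lemma density_FIN_tendsto_1: "density FIN \<longlonglongrightarrow> 1"
proof (rule LIMSEQ_I)
  fix r :: real assume "0 < r"
  then obtain T where T: "survival_prob T 0 < r / 2"
    using order_tendstoD(2)[OF survival_prob_tendsto_0, of "r / 2"]
    by (auto simp: eventually_sequentially)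
  obtain M :: nat where M: "2 * real T * (real T + 1) / r < real M"
    using reals_Archimedean2 by blast
  have "norm (density FIN n - 1) < r" if "max M (max T 1) \<le> n" for n
  proof -
    have "2 * real T * (real T + 1) < r * real M"
      using M \<open>0 < r\<close> by (simp add: field_simps)
    also have "\<dots> \<le> r * (real n + 1)"
      using that \<open>0 < r\<close> by simp
    finally have "real T * (real T + 1) / (real n + 1) < r / 2"
      by (simp add: field_simps)
    then have "1 - r < density FIN n"
      using density_FIN_lower[of n T] that T by linarith
    with density_le_1[of FIN n] show ?thesis
      by simp
  qed
  then show "\<exists>N. \<forall>n\<ge>N. norm (density FIN n - 1) < r"
    by blast
qed

theorem mainTheorem9:
  shows "has_asym_prob FIN 1 \<and> has_asym_prob COF 0"
proof
  show "has_asym_prob FIN 1"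
    unfolding has_asym_prob_iff_density by (rule density_FIN_tendsto_1)
  have FIN_gap: "(\<lambda>n. 1 - density FIN n) \<longlonglongrightarrow> 0"
    using tendsto_diff[OF tendsto_const density_FIN_tendsto_1, of 1] by simp
  show "has_asym_prob COF 0"
    unfolding has_asym_prob_iff_density
  proof (rule tendsto_sandwich[OF _ _ tendsto_const FIN_gap])
    show "\<forall>\<^sub>F n in sequentially. 0 \<le> density COF n"
      by (simp add: density_def)
    show "\<forall>\<^sub>F n in sequentially. density COF n \<le> 1 - density FIN n"
      by (simp add: density_COF_le)
  qed
qed

end
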